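(* An even nonnegative integer $n$ satisfies $v(n)=2$ if and only if $n\in\{18,22,24,28\}$.
   Context: A hyperbinary expansion of a nonnegative integer $n$ is a word $x_0\cdots x_k$ over $\{0,1,2\}$ with $x_0\ne0$ and $\sum_i x_i2^{k-i}=n$. The empty word is the unique hyperbinary expansion of $0$. Write $\mathcal H(n)$ for the set of such expansions and $b(n)=|\mathcal H(n)|$. $A(n)$ is the directed graph on $\mathcal H(n)$ with an arc from $\mathbf x02\mathbf y$ to $\mathbf x10\mathbf y$, from $2\mathbf y$ to $10\mathbf y$, and from $\mathbf x12\mathbf y$ to $\mathbf x20\mathbf y$, for arbitrary words $\mathbf x,\mathbf y$ whenever both endpoints lie in $\mathcal H(n)$. $A(n)$ is connected. $v(n)$ denotes the cyclomatic number of $A(n)$: (number of arcs) $-\,b(n)+1$. *)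

theory Defs
  imports Main
begin

text \<open>Words over {0,1,2} are lists of naturals; the value of x_0...x_k is sum x_i 2^(k-i).\<close>

definition hb_val :: "nat list \<Rightarrow> nat" where
  "hb_val xs = foldl (\<lambda>a d. 2 * a + d) 0 xs"

text \<open>Hyperbinary expansions of n (the empty word is the expansion of 0).\<close>
definition hyperbinary :: "nat \<Rightarrow> nat list set" where
  "hyperbinary n = {xs. set xs \<subseteq> {0,1,2} \<and> (xs \<noteq> [] \<longrightarrow> hd xs \<noteq> 0) \<and> hb_val xs = n}"

definition b :: "nat \<Rightarrow> nat" where
  "b n = card (hyperbinary n)"

definition arcs :: "nat \<Rightarrow> (nat list \<times> nat list) set" where
  "arcs n = {(u, w). u \<in> hyperbinary n \<and> w \<in> hyperbinary n \<and>
     ((\<exists>x y. u = x @ [0,2] @ y \<and> w = x @ [1,0] @ y) \<or>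
      (\<exists>y. u = 2 # y \<and> w = [1,0] @ y) \<or>
      (\<exists>x y. u = x @ [1,2] @ y \<and> w = x @ [2,0] @ y))}"

definition v :: "nat \<Rightarrow> int" where
  "v n = int (card (arcs n)) - int (b n) + 1"

end

theory Submission
  imports Defs
begin

(* Splitting off the last digit gives H(2m+1) = H(m)1 and H(2m+2) = H(m+1)0 + H(m)2.
   An arc of A(2m+2) either leaves the last digit alone, and then comes from A(m+1) or A(m),
   or it is one of the moves 02 -> 10, 12 -> 20, 2 -> 10 ending at the last position; these
   turn u2 into u'0, where u' is u with its last digit raised, and they exist exactly for the
   b(m div 2) expansions u of m not ending in 2. Hence v(2m+1) = v(m) and
   v(2m+2) = v(m+1) + v(m) + b(m div 2) - 1. In particular v >= 0 and v(4k+2), v(4k+4) >= b(k) - 1,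
   so v(n) <= 2 for even n > 0 forces b(k) <= 3, i.e. k+1 = 2^t d with d in {1,3,5,7}.
   Unwinding the recursion along powers of 2 gives
   v(2^(t+2) d)  =  v(2d) + (t+1)(v(d-1) + b(d-1) - 1), and the same with 2^(t+2) d - 2 and 2d - 2;
   checking the four values of d leaves exactly 18, 22, 24 and 28. *)

lemma hb_val_Nil [simp]: "hb_val [] = 0"
  by (simp add: hb_val_def)

lemma hb_val_snoc [simp]: "hb_val (xs @ [d]) = 2 * hb_val xs + d"
  by (simp add: hb_val_def)

lemma hb_val_eq_0_iff: "hb_val xs = 0 \<longleftrightarrow> set xs \<subseteq> {0}"
  by (induction xs rule: rev_induct) auto

lemma hb_val_hyperbinary: "x \<in> hyperbinary n \<Longrightarrow> hb_val x = n"
  by (simp add: hyperbinary_def)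

lemma hyperbinary_0: "hyperbinary 0 = {[]}"
proof -
  have "x = []" if "x \<in> hyperbinary 0" for x
    using that by (cases x) (auto simp: hyperbinary_def hb_val_eq_0_iff)
  then show ?thesis by (auto simp: hyperbinary_def)
qed

lemma Nil_in_hyperbinary_iff [simp]: "[] \<in> hyperbinary n \<longleftrightarrow> n = 0"
  by (auto simp: hyperbinary_def)

lemma snoc_in_hyperbinary_iff:
  "x @ [d] \<in> hyperbinary n \<longleftrightarrow>
     d \<le> 2 \<and> 2 * hb_val x + d = n \<and> x \<in> hyperbinary (hb_val x) \<and> (x = [] \<longrightarrow> d \<noteq> 0)"
  by (auto simp: hyperbinary_def hd_append)

lemma hyperbinary_Suc_snoc:
  assumes "w \<in> hyperbinary (Suc n)"
  obtains x d where "w = x @ [d]" "d \<le> 2" "2 * hb_val x + d = Suc n" "x \<in> hyperbinary (hb_val x)"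
proof -
  have "w \<noteq> []" using assms by auto
  then obtain x d where "w = x @ [d]" by (metis rev_exhaust)
  with assms that show thesis by (simp add: snoc_in_hyperbinary_iff)
qed

lemma hyperbinary_odd: "hyperbinary (2*m+1) = (\<lambda>x. x @ [1]) ` hyperbinary m"
proof (intro set_eqI iffI)
  fix w assume "w \<in> hyperbinary (2*m+1)"
  then obtain x d where "w = x @ [d]" "d \<le> 2" "2 * hb_val x + d = 2*m+1" "x \<in> hyperbinary (hb_val x)"
    by (auto elim: hyperbinary_Suc_snoc)
  moreover from this have "d = 1" by presburger
  ultimately show "w \<in> (\<lambda>x. x @ [1]) ` hyperbinary m" by auto
qed (auto simp: snoc_in_hyperbinary_iff hb_val_hyperbinary)

lemma hyperbinary_even:
  "hyperbinary (2*m+2) = (\<lambda>x. x @ [0]) ` hyperbinary (m+1) \<union> (\<lambda>x. x @ [2]) ` hyperbinary m"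
proof (intro set_eqI iffI)
  fix w assume "w \<in> hyperbinary (2*m+2)"
  then obtain x d where "w = x @ [d]" "d \<le> 2" "2 * hb_val x + d = 2*m+2" "x \<in> hyperbinary (hb_val x)"
    by (auto elim: hyperbinary_Suc_snoc)
  moreover from this have "d = 0 \<and> hb_val x = m+1 \<or> d = 2 \<and> hb_val x = m" by presburger
  ultimately show "w \<in> (\<lambda>x. x @ [0]) ` hyperbinary (m+1) \<union> (\<lambda>x. x @ [2]) ` hyperbinary m"
    by auto
qed (auto simp: snoc_in_hyperbinary_iff hb_val_hyperbinary)

lemma nat_odd_even_induct [case_names 0 odd even]:
  fixes n :: nat
  assumes "P 0" and "\<And>m. P m \<Longrightarrow> P (2*m+1)" and "\<And>m. P m \<Longrightarrow> P (m+1) \<Longrightarrow> P (2*m+2)"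
  shows "P n"
proof (induction n rule: less_induct)
  case (less n)
  have "n = 0 \<or> (\<exists>m. n = 2*m+1 \<or> n = 2*m+2)" by presburger
  then show ?case using assms less by auto
qed

lemma finite_hyperbinary: "finite (hyperbinary n)"
proof (induction n rule: nat_odd_even_induct)
  case (odd m)
  then show ?case by (simp only: hyperbinary_odd finite_imageI)
next
  case (even m)
  then show ?case by (simp only: hyperbinary_even finite_imageI finite_Un)
qed (simp add: hyperbinary_0)

lemma b_0: "b 0 = 1"
  by (simp add: b_def hyperbinary_0)

lemma b_odd: "b (2*m+1) = b m"
  unfolding b_def hyperbinary_odd by (simp add: card_image inj_on_def)

lemma b_even: "b (2*m+2) = b (m+1) + b m"
  unfolding b_def hyperbinary_even
  by (subst card_Un_disjoint) (auto simp: finite_hyperbinary card_image inj_on_def)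

lemma b_pos: "b n > 0"
proof (induction n rule: nat_odd_even_induct)
  case 0 show ?case by (simp add: b_0)
next
  case (odd m) then show ?case by (simp only: b_odd)
next
  case (even m) then show ?case by (simp only: b_even add_pos_pos)
qed

definition hb_move :: "nat list \<Rightarrow> nat list \<Rightarrow> bool" where
  "hb_move u w \<longleftrightarrow>
     (\<exists>x y. u = x @ [0,2] @ y \<and> w = x @ [1,0] @ y) \<or>
     (\<exists>y. u = 2 # y \<and> w = [1,0] @ y) \<or>
     (\<exists>x y. u = x @ [1,2] @ y \<and> w = x @ [2,0] @ y)"

definition incr_last :: "nat list \<Rightarrow> nat list" where
  "incr_last u = (if u = [] then [1] else butlast u @ [last u + 1])"

lemma arcs_eq: "arcs n = {(u, w). u \<in> hyperbinary n \<and> w \<in> hyperbinary n \<and> hb_move u w}"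
  by (simp add: arcs_def hb_move_def)

lemma snoc_eq_append_Cons_Cons:
  "u @ [a] = x @ p # q # y \<longleftrightarrow>
    (y = [] \<and> q = a \<and> u = x @ [p]) \<or> (\<exists>y'. y = y' @ [a] \<and> u = x @ p # q # y')"
  by (cases y rule: rev_cases) auto

lemma snoc_eq_Cons:
  "u @ [a] = p # y \<longleftrightarrow> (y = [] \<and> p = a \<and> u = []) \<or> (\<exists>y'. y = y' @ [a] \<and> u = p # y')"
  by (cases y rule: rev_cases) auto

lemma hb_move_append: "hb_move u w \<Longrightarrow> hb_move (u @ z) (w @ z)"
  unfolding hb_move_def by (metis append.assoc append_Cons)

lemma hb_move_snoc:
  "hb_move (u @ [a]) (w @ [c]) \<longleftrightarrow>
    (a = c \<and> hb_move u w) \<or> (a = 2 \<and> c = 0 \<and> (u = [] \<or> last u < 2) \<and> w = incr_last u)"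
proof
  assume "hb_move (u @ [a]) (w @ [c])"
  then show "(a = c \<and> hb_move u w) \<or> (a = 2 \<and> c = 0 \<and> (u = [] \<or> last u < 2) \<and> w = incr_last u)"
    unfolding hb_move_def incr_last_def
    by (elim disjE exE conjE) (auto simp: snoc_eq_append_Cons_Cons snoc_eq_Cons)
next
  assume "(a = c \<and> hb_move u w) \<or> (a = 2 \<and> c = 0 \<and> (u = [] \<or> last u < 2) \<and> w = incr_last u)"
  then show "hb_move (u @ [a]) (w @ [c])"
  proof
    assume "a = c \<and> hb_move u w"
    then show ?thesis by (simp add: hb_move_append)
  next
    assume carry: "a = 2 \<and> c = 0 \<and> (u = [] \<or> last u < 2) \<and> w = incr_last u"
    show ?thesis
    proof (cases u rule: rev_cases)
      case Nil
      then show ?thesis using carry unfolding hb_move_def incr_last_def by auto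
    next
      case (snoc x p)
      then have "p = 0 \<or> p = 1" using carry by auto
      then show ?thesis using carry snoc unfolding hb_move_def incr_last_def by fastforce
    qed
  qed
qed

definition incrementable :: "nat \<Rightarrow> nat list set" where
  "incrementable m = {u \<in> hyperbinary m. u = [] \<or> last u < 2}"

lemma incr_last_in_hyperbinary:
  "u \<in> hyperbinary m \<Longrightarrow> u = [] \<or> last u < 2 \<Longrightarrow> incr_last u \<in> hyperbinary (m+1)"
  by (cases u rule: rev_cases)
     (auto simp: incr_last_def hyperbinary_def hb_val_def hd_append)

lemma arcs_odd: "arcs (2*m+1) = (\<lambda>(u, w). (u @ [1], w @ [1])) ` arcs m"
  unfolding arcs_eq hyperbinary_odd by (auto simp: hb_move_snoc)

lemma arcs_even:
  "arcs (2*m+2) = (\<lambda>(u, w). (u @ [0], w @ [0])) ` arcs (m+1) \<union> (\<lambda>(u, w). (u @ [2], w @ [2])) ` arcs m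
     \<union> (\<lambda>u. (u @ [2], incr_last u @ [0])) ` incrementable m"
  (is "_ = ?keep0 \<union> ?keep2 \<union> ?carry")
proof
  show "arcs (2*m+2) \<subseteq> ?keep0 \<union> ?keep2 \<union> ?carry"
    unfolding arcs_eq hyperbinary_even by (auto simp: hb_move_snoc incrementable_def)
next
  have "?keep0 \<union> ?keep2 \<subseteq> arcs (2*m+2)"
    unfolding arcs_eq hyperbinary_even by (auto simp: hb_move_snoc)
  moreover have "?carry \<subseteq> arcs (2*m+2)"
  proof clarify
    fix u assume "u \<in> incrementable m"
    then have u: "u \<in> hyperbinary m" "u = [] \<or> last u < 2" by (auto simp: incrementable_def)
    then have "u @ [2] \<in> hyperbinary (2*m+2)" "incr_last u @ [0] \<in> hyperbinary (2*m+2)"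
      using incr_last_in_hyperbinary[OF u] unfolding hyperbinary_even by auto
    moreover have "hb_move (u @ [2]) (incr_last u @ [0])"
      using u(2) by (simp add: hb_move_snoc)
    ultimately show "(u @ [2], incr_last u @ [0]) \<in> arcs (2*m+2)"
      by (simp add: arcs_eq)
  qed
  ultimately show "?keep0 \<union> ?keep2 \<union> ?carry \<subseteq> arcs (2*m+2)" by blast
qed

lemma finite_arcs: "finite (arcs n)"
  by (rule finite_subset[of _ "hyperbinary n \<times> hyperbinary n"]) (auto simp: arcs_eq finite_hyperbinary)

lemma finite_incrementable: "finite (incrementable n)"
  by (simp add: incrementable_def finite_hyperbinary)

lemma card_arcs_odd: "card (arcs (2*m+1)) = card (arcs m)"
  unfolding arcs_odd by (rule card_image) (auto simp: inj_on_def)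

lemma card_arcs_even:
  "card (arcs (2*m+2)) = card (arcs (m+1)) + card (arcs m) + card (incrementable m)"
proof -
  have "inj_on (\<lambda>(u, w). (u @ [d], w @ [d])) A" for d :: nat and A
    by (auto simp: inj_on_def)
  moreover have "inj_on (\<lambda>u. (u @ [2], incr_last u @ [0])) A" for A
    by (auto simp: inj_on_def)
  ultimately show ?thesis
    unfolding arcs_even
    by (subst card_Un_disjoint, auto simp: finite_arcs finite_incrementable card_image)+
qed

lemma card_incrementable: "card (incrementable m) = b (m div 2)"
proof -
  have "m = 0 \<or> (\<exists>k. m = 2*k+1 \<or> m = 2*k+2)" by presburger
  then show ?thesis
  proof (elim disjE exE)
    assume "m = 0"
    then have "incrementable m = {[]}" by (auto simp: incrementable_def hyperbinary_0)
    then show ?thesis using \<open>m = 0\<close> by (simp add: b_0)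
  next
    fix k assume m: "m = 2*k+1"
    have "incrementable m = hyperbinary m"
      unfolding incrementable_def m hyperbinary_odd by auto
    then have "card (incrementable m) = b (2*k+1)" by (simp add: b_def m)
    then show ?thesis unfolding b_odd using m by simp
  next
    fix k assume m: "m = 2*k+2"
    have "incrementable m = (\<lambda>x. x @ [0]) ` hyperbinary (k+1)"
      unfolding incrementable_def m hyperbinary_even by auto
    then show ?thesis by (simp add: m b_def card_image inj_on_def)
  qed
qed

lemma v_0: "v 0 = 0"
proof -
  have "arcs 0 = {}" by (simp add: arcs_eq hyperbinary_0 hb_move_def)
  then show ?thesis by (simp add: v_def b_0)
qed

lemma v_odd: "v (2*m+1) = v m"
  unfolding v_def b_odd card_arcs_odd ..

lemma v_even: "v (2*m+2) = v (m+1) + v m + int (b (m div 2)) - 1"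
  unfolding v_def b_even card_arcs_even card_incrementable by simp

lemma v_nonneg: "v n \<ge> 0"
proof (induction n rule: nat_odd_even_induct)
  case 0 show ?case by (simp add: v_0)
next
  case (odd m) then show ?case by (simp only: v_odd)
next
  case (even m) then show ?case using b_pos[of "m div 2"] unfolding v_even by linarith
qed

lemma v_4_mult_plus_2: "v (4*k+2) = v (2*k) + v k + int (b k) - 1"
  using v_even[of "2*k"] v_odd[of k] by (simp add: mult.assoc)

lemma v_4_mult_plus_4: "v (4*k+4) = v (2*k+2) + v k + int (b k) - 1"
proof -
  have "4*k+4 = 2*(2*k+1)+2" "2*k+1+1 = 2*k+2" "(2*k+1) div 2 = k" by simp_all
  then show ?thesis by (simp only: v_even v_odd)
qed

lemma b_add_b_Suc_odd: "y = 2*k+1 \<Longrightarrow> b y + b (y+1) = 2 * b k + b (k+1)"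
  using b_odd[of k] b_even[of k] by simp

lemma b_add_b_Suc_even: "y = 2*k+2 \<Longrightarrow> b y + b (y+1) = b k + 2 * b (k+1)"
  using b_even[of k] b_odd[of "k+1"] by simp

lemma b_add_b_Suc_ge_3: "y \<ge> 1 \<Longrightarrow> b y + b (y+1) \<ge> 3"
proof -
  assume "y \<ge> 1"
  then have "\<exists>k. y = 2*k+1 \<or> y = 2*k+2" by presburger
  then obtain k where "y = 2*k+1 \<or> y = 2*k+2" by blast
  then show ?thesis
    using b_add_b_Suc_odd[of y k] b_add_b_Suc_even[of y k] b_pos[of k] b_pos[of "k+1"] by linarith
qed

lemma b_add_b_Suc_ge_4: "y \<ge> 3 \<Longrightarrow> b y + b (y+1) \<ge> 4"
proof -
  assume "y \<ge> 3"
  then have "\<exists>k. k \<ge> 1 \<and> (y = 2*k+1 \<or> y = 2*k+2)" by presburger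
  then obtain k where "k \<ge> 1" "y = 2*k+1 \<or> y = 2*k+2" by blast
  then show ?thesis
    using b_add_b_Suc_odd[of y k] b_add_b_Suc_even[of y k] b_pos[of k] b_pos[of "k+1"]
      b_add_b_Suc_ge_3[of k] by linarith
qed

lemma b_le_3_imp: "b x \<le> 3 \<Longrightarrow> \<exists>t d. d \<in> {1,3,5,7} \<and> x+1 = 2^t * d"
proof (induction x rule: nat_odd_even_induct)
  case 0
  show ?case by (rule exI[of _ 0], rule exI[of _ 1]) simp
next
  case (odd m)
  then obtain t d where "d \<in> {1,3,5,7}" "m+1 = 2^t * d" by (auto simp only: b_odd)
  then show ?case by (intro exI[of _ "t+1"] exI[of _ d]) simp
next
  case (even m)
  then have "m \<le> 2" using b_add_b_Suc_ge_4[of m] unfolding b_even by linarith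
  then show ?case by (intro exI[of _ 0] exI[of _ "2*m+3"]) auto
qed

lemma v_even_le_2_imp:
  assumes "even n" "n \<noteq> 0" "v n \<le> 2"
  shows "\<exists>t d. d \<in> {1,3,5,7} \<and> (n = 2^(t+2) * d \<or> n = 2^(t+2) * d - 2)"
proof -
  have "\<exists>k. n = 4*k+2 \<or> n = 4*k+4" using assms(1,2) by presburger
  then obtain k where n: "n = 4*k+2 \<or> n = 4*k+4" by blast
  then have "b k \<le> 3"
    using assms(3) v_4_mult_plus_2[of k] v_4_mult_plus_4[of k]
      v_nonneg[of k] v_nonneg[of "2*k"] v_nonneg[of "2*k+2"] by auto
  then obtain t d where "d \<in> {1,3,5,7}" "k+1 = 2^t * d" using b_le_3_imp by blast
  moreover from this have "4*k+4 = 2^(t+2) * d" by (simp add: power_add)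
  ultimately show ?thesis using n by (intro exI[of _ t] exI[of _ d]) auto
qed

(* In binary, 2^r (x+1) - 1 is x followed by r ones. *)
lemma v_append_ones: "v (2^r * (x+1) - 1) = v x"
proof (induction r)
  case (Suc r)
  have "2^r * (x+1) \<ge> (1::nat)" by (simp add: Suc_le_eq)
  then have "2^Suc r * (x+1) - 1 = 2 * (2^r * (x+1) - 1) + 1" by (simp add: algebra_simps)
  then show ?case using Suc v_odd by simp
qed simp

lemma b_append_ones: "b (2^r * (x+1) - 1) = b x"
proof (induction r)
  case (Suc r)
  have "2^r * (x+1) \<ge> (1::nat)" by (simp add: Suc_le_eq)
  then have "2^Suc r * (x+1) - 1 = 2 * (2^r * (x+1) - 1) + 1" by (simp add: algebra_simps)
  then show ?case using Suc b_odd by simp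
qed simp

lemma v_pow2_mult_step:
  assumes "d > 0"
  shows "v (2^(s+2) * d) = v (2^(s+1) * d) + v (d-1) + int (b (d-1)) - 1"
    and "v (2^(s+2) * d - 2) = v (2^(s+1) * d - 2) + v (d-1) + int (b (d-1)) - 1"
proof -
  define k where "k = 2^s * d - 1"
  have "k + 1 = 2^s * d" using assms by (simp add: k_def)
  then have "2^(s+2) * d = 4*k+4" "2^(s+1) * d = 2*k+2" "2^(s+2) * d - 2 = 4*k+2" "2^(s+1) * d - 2 = 2*k"
    by (simp_all add: algebra_simps)
  moreover have "v k = v (d-1)" "b k = b (d-1)"
    using v_append_ones[of s "d-1"] b_append_ones[of s "d-1"] assms by (simp_all add: k_def)
  ultimately show "v (2^(s+2) * d) = v (2^(s+1) * d) + v (d-1) + int (b (d-1)) - 1"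
    and "v (2^(s+2) * d - 2) = v (2^(s+1) * d - 2) + v (d-1) + int (b (d-1)) - 1"
    by (simp_all only: v_4_mult_plus_2 v_4_mult_plus_4)
qed

lemma v_pow2_mult:
  assumes "d > 0"
  shows "v (2^(s+1) * d) = v (2*d) + int s * (v (d-1) + int (b (d-1)) - 1)"
proof (induction s)
  case (Suc s)
  have "v (2^(Suc s + 1) * d) = v (2^(s+1) * d) + v (d-1) + int (b (d-1)) - 1"
    using v_pow2_mult_step(1)[OF assms, of s] by simp
  then show ?case using Suc by (simp add: algebra_simps)
qed simp

lemma v_pow2_mult_minus_2:
  assumes "d > 0"
  shows "v (2^(s+1) * d - 2) = v (2*d - 2) + int s * (v (d-1) + int (b (d-1)) - 1)"
proof (induction s)
  case (Suc s)
  have "v (2^(Suc s + 1) * d - 2) = v (2^(s+1) * d - 2) + v (d-1) + int (b (d-1)) - 1"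
    using v_pow2_mult_step(2)[OF assms, of s] by simp
  then show ?case using Suc by (simp add: algebra_simps)
qed simp

lemma b_small_values: "b 1 = 1" "b 2 = 2" "b 3 = 1" "b 4 = 3" "b 6 = 3"
proof -
  show b1: "b 1 = 1" using b_odd[of 0] b_0 by (simp add: eval_nat_numeral)
  show b2: "b 2 = 2" using b_even[of 0] b_0 b1 by (simp add: eval_nat_numeral)
  show b3: "b 3 = 1" using b_odd[of 1] b1 by (simp add: eval_nat_numeral)
  show "b 4 = 3" using b_even[of 1] b1 b2 by (simp add: eval_nat_numeral)
  show "b 6 = 3" using b_even[of 2] b2 b3 by (simp add: eval_nat_numeral)
qed

lemma v_small_values:
  "v 1 = 0" "v 2 = 0" "v 3 = 0" "v 4 = 0" "v 6 = 0" "v 8 = 0" "v 10 = 1" "v 12 = 1" "v 14 = 0"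
proof -
  show v1: "v 1 = 0" using v_odd[of 0] v_0 by (simp add: eval_nat_numeral)
  show v2: "v 2 = 0" using v_4_mult_plus_2[of 0] v_0 b_0 by (simp add: eval_nat_numeral)
  show v3: "v 3 = 0" using v_odd[of 1] v1 by (simp add: eval_nat_numeral)
  show v4: "v 4 = 0" using v_4_mult_plus_4[of 0] v_0 v2 b_0 by (simp add: eval_nat_numeral)
  show v6: "v 6 = 0" using v_4_mult_plus_2[of 1] v1 v2 b_small_values by (simp add: eval_nat_numeral)
  show "v 8 = 0" using v_4_mult_plus_4[of 1] v1 v4 b_small_values by (simp add: eval_nat_numeral)
  show "v 10 = 1" using v_4_mult_plus_2[of 2] v2 v4 b_small_values by (simp add: eval_nat_numeral)
  show "v 12 = 1" using v_4_mult_plus_4[of 2] v2 v6 b_small_values by (simp add: eval_nat_numeral)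
  show "v 14 = 0" using v_4_mult_plus_2[of 3] v3 v6 b_small_values by (simp add: eval_nat_numeral)
qed

lemma v_pow2_mult_eq_2_iff:
  assumes "d \<in> {1,3,5,7}"
  shows "v (2^(t+2) * d) = 2 \<longleftrightarrow> (d = 3 \<and> t = 1) \<or> (d = 7 \<and> t = 0)"
proof -
  have "v (2^(t+2) * d) = v (2*d) + int (t+1) * (v (d-1) + int (b (d-1)) - 1)"
    using v_pow2_mult[of d "t+1"] assms by auto
  with assms show ?thesis
    by (auto simp: v_0 b_0 v_small_values b_small_values)
qed

lemma v_pow2_mult_minus_2_eq_2_iff:
  assumes "d \<in> {1,3,5,7}"
  shows "v (2^(t+2) * d - 2) = 2 \<longleftrightarrow> (d = 3 \<and> t = 1) \<or> (d = 5 \<and> t = 0)"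
proof -
  have "v (2^(t+2) * d - 2) = v (2*d - 2) + int (t+1) * (v (d-1) + int (b (d-1)) - 1)"
    using v_pow2_mult_minus_2[of d "t+1"] assms by auto
  with assms show ?thesis
    by (auto simp: v_0 b_0 v_small_values b_small_values)
qed

theorem mainTheorem4:
  fixes n :: nat
  assumes "even n"
  shows "v n = 2 \<longleftrightarrow> n \<in> {18, 22, 24, 28}"
proof
  assume v2: "v n = 2"
  then have "n \<noteq> 0" using v_0 by (intro notI) simp
  moreover have "v n \<le> 2" using v2 by simp
  ultimately obtain t d where d: "d \<in> {1,3,5,7}" and n: "n = 2^(t+2) * d \<or> n = 2^(t+2) * d - 2"
    using v_even_le_2_imp assms by blast
  from n show "n \<in> {18, 22, 24, 28}"
  proof
    assume "n = 2^(t+2) * d"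
    moreover from this have "(d = 3 \<and> t = 1) \<or> (d = 7 \<and> t = 0)"
      using v2 v_pow2_mult_eq_2_iff[OF d] by simp
    ultimately show ?thesis by auto
  next
    assume "n = 2^(t+2) * d - 2"
    moreover from this have "(d = 3 \<and> t = 1) \<or> (d = 5 \<and> t = 0)"
      using v2 v_pow2_mult_minus_2_eq_2_iff[OF d] by simp
    ultimately show ?thesis by auto
  qed
next
  have "v 24 = 2" "v 28 = 2"
    using v_pow2_mult_eq_2_iff[of 3 1] v_pow2_mult_eq_2_iff[of 7 0] by simp_all
  moreover have "v 22 = 2" "v 18 = 2"
    using v_pow2_mult_minus_2_eq_2_iff[of 3 1] v_pow2_mult_minus_2_eq_2_iff[of 5 0] by simp_all
  moreover assume "n \<in> {18, 22, 24, 28}"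
  ultimately show "v n = 2" by auto
qed

end
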